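(* Let $X=\bigcap_{i=1}^mX_i\subseteq\mathbb{R}^n$ with each $X_i$ closed convex and $X$ nonempty, and suppose there is $D_X>0$ with $\|u-v\|^2\le D_X^2$ for all $u,v\in X$. Let $F(x)=\mathbb{E}[F(x,\omega)]$ and assume: (A1) $F$ is $L$-Lipschitz continuous and monotone on $\mathbb{R}^n$; (A2) the solution set $X^*$ of VI$(X,F)$ is nonempty and compact and $\|F(x^* )\|\le C$ for all $x^*\in X^*$; (A4) the noise condition in the context holds with constants $\nu_1,\nu_2\ge0$; (A5) there is $\eta>0$ with $\|x-\Pi_X(x)\|^2\le\eta\max_i\|x-\Pi_{X_i}(x)\|^2$ for all $x\in\mathbb{R}^n$; (A6) $\inf_{k\ge0}P(l_k=i\mid\mathcal{F}_k)\ge\rho_i/m$ a.s. for each $i$, with $\rho_i\in(0,1]$; let $\rho=\min_i\rho_i$. Let $\{x_k\}$ be generated by (r-SPRG): $x_{k+1}=\Pi_{l_k}(x_k-\gamma_kF(2x_k-x_{k-1},\omega_k))$. Let $\beta\triangleq1-\frac{\rho}{32m\eta}$. Then: (a) if $\sum_k\gamma_k=\infty$ and $\sum_k\gamma_k^2<\infty$, then $\mathrm{dist}(x_k,X)\to0$ almost surely; (b) if $\gamma_k=1/k^{t/2}$ with $t\ge1$, then $\mathbb{E}[\mathrm{dist}(x_k,X)]\le\mathcal{O}(1/k^{t/2})$ for all $k\ge\bar k$, where $\bar k\triangleq\left\lceil\frac{1}{1-(1-\beta/2)^{1/t}}-1\right\rceil$; (c) if $\gamma_k=1/k^{1/2}$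 and $\bar x_{K,\bar k}\triangleq\frac{\sum_{k=\bar k+\lfloor K/2\rfloor}^{\bar k+K}\gamma_kx_k}{\sum_{k=\bar k+\lfloor K/2\rfloor}^{\bar k+K}\gamma_k}$ (with $\bar k$ as in (b) for $t=1$), then $\mathbb{E}[\mathrm{dist}(\bar x_{K,\bar k},X)]\le\mathcal{O}(1/\sqrt K)$.
   Context: VI$(X,F)$: find $x^*\in X$ with $F(x^* )^T(x-x^* )\ge0$ for all $x\in X$. $\Pi_{l_k}$ is Euclidean projection onto $X_{l_k}$, $l_k$ a random index; $\mathrm{dist}(x,X)=\min_{y\in X}\|x-y\|$. The scheme uses initial points $x_{-1},x_0$. $\mathcal{F}_k$ is the history before iteration $k$'s random quantities. Noise condition (A4): with $y_k=2x_k-x_{k-1}$ and $w_k=F(y_k,\omega_k)-F(y_k)$, $\mathbb{E}[w_k\mid\mathcal{F}_k]=0$ and $\mathbb{E}[\|w_k\|^2\mid\mathcal{F}_k]\le\nu_1^2\|y_k\|^2+\nu_2^2$ a.s. *)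

theory Defs
  imports "HOL-Analysis.Analysis" "HOL-Probability.Probability"
begin

definition VI_sol :: "(real^'n) set \<Rightarrow> (real^'n \<Rightarrow> real^'n) \<Rightarrow> (real^'n) set" where
  "VI_sol X F = {x \<in> X. \<forall>y\<in>X. F x \<bullet> (y - x) \<ge> 0}"

definition prev_iter :: "(nat \<Rightarrow> 'a \<Rightarrow> real^'n) \<Rightarrow> real^'n \<Rightarrow> nat \<Rightarrow> 'a \<Rightarrow> real^'n" where
  "prev_iter x xm1 k \<omega> = (if k = 0 then xm1 else x (k - 1) \<omega>)"

definition extrap :: "(nat \<Rightarrow> 'a \<Rightarrow> real^'n) \<Rightarrow> real^'n \<Rightarrow> nat \<Rightarrow> 'a \<Rightarrow> real^'n" where
  "extrap x xm1 k \<omega> = 2 *\<^sub>R x k \<omega> - prev_iter x xm1 k \<omega>"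

definition kbar :: "real \<Rightarrow> real \<Rightarrow> nat" where
  "kbar \<beta> t = nat \<lceil>1 / (1 - (1 - \<beta> / 2) powr (1 / t)) - 1\<rceil>"

definition wavg :: "(nat \<Rightarrow> real) \<Rightarrow> (nat \<Rightarrow> 'a \<Rightarrow> real^'n) \<Rightarrow> nat \<Rightarrow> nat \<Rightarrow> 'a \<Rightarrow> real^'n" where
  "wavg \<gamma> x kb K \<omega> =
     (1 / (\<Sum>k\<in>{kb + K div 2 .. kb + K}. \<gamma> k)) *\<^sub>R (\<Sum>k\<in>{kb + K div 2 .. kb + K}. \<gamma> k *\<^sub>R x k \<omega>)"

end

theory Submission
  imports Defs
begin

(* Only feasibility is at stake.  Write e_k for the mean squared distance E dist(x_k, X)^2.
   Projecting onto a sampled X_(l_k) containing X moves no point farther from X and removes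
   dist(x_k, X_(l_k))^2 / 2; by the sampling bound (A6) and the error bound (A5) the expected gain
   is at least 2 kappa e_k with kappa = rho / (4 m eta).  As X is bounded and F is Lipschitz, the
   second moment of the sampled operator at y_k grows at most linearly in 1 + e_k + e_(k-1).  Hence
   e_(k+1) <= (1 - kappa) e_k + O(gamma_k^2) (1 + e_k + e_(k-1)), which forces sum e_k < infinity
   when sum gamma_k^2 < infinity (so dist(x_k, X) -> 0 almost surely) and e_k = O(gamma_k^2) for
   polynomial steps, so E dist(x_k, X) = O(gamma_k) by Jensen; convexity of dist(-, X) carries the
   bound over to the weighted averages. *)

section \<open>Distances to convex sets\<close>

lemma norm_sub_closest_point_eq_infdist:
  fixes S :: "'a::euclidean_space set"
  assumes "closed S" "S \<noteq> {}"
  shows "norm (z - closest_point S z) = infdist z S"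
  using setdist_closest_point[OF assms, of z] by (simp add: infdist_eq_setdist dist_norm)

lemma closest_point_pythagoras:
  fixes S :: "'a::euclidean_space set"
  assumes "convex S" "closed S" "p \<in> S"
  shows "(norm (v - closest_point S v))^2 + (norm (closest_point S v - p))^2 \<le> (norm (v - p))^2"
proof -
  define q where "q = closest_point S v"
  have "inner (v - q) (p - q) \<le> 0"
    unfolding q_def using closest_point_dot[OF assms] .
  moreover have "(norm (v - p))^2 = (norm (v - q))^2 + (norm (q - p))^2 - 2 * inner (v - q) (p - q)"
    by (simp add: power2_norm_eq_inner inner_diff inner_commute algebra_simps)
  ultimately show ?thesis unfolding q_def by linarith
qed

lemma young_sq:
  fixes a b \<epsilon> :: real
  assumes "\<epsilon> > 0"
  shows "2 * a * b \<le> \<epsilon> * a^2 + b^2 / \<epsilon>"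
proof -
  have "0 \<le> (sqrt \<epsilon> * a - b / sqrt \<epsilon>)^2" by simp
  also have "\<dots> = \<epsilon> * a^2 - 2 * a * b + b^2 / \<epsilon>"
    using assms by (simp add: power2_diff power_mult_distrib power_divide)
  finally show ?thesis by simp
qed

lemma power2_add_le:
  fixes a b :: real
  shows "(a + b)^2 \<le> 2 * (a^2 + b^2)"
  using sum_squares_bound[of a b] by (simp add: power2_sum)

lemma infdist_closest_point_step:
  fixes S X :: "'a::euclidean_space set"
  assumes "convex S" "closed S" "X \<subseteq> S" "closed X" "X \<noteq> {}" "\<epsilon> > 0"
  shows "(infdist (closest_point S (z - h)) X)^2 + (infdist z S)^2 / 2
          \<le> (1 + \<epsilon>) * (infdist z X)^2 + (2 + 1 / \<epsilon>) * (norm h)^2"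
proof -
  define p where "p = closest_point X z"
  define q where "q = closest_point S (z - h)"
  have "p \<in> X" unfolding p_def using closest_point_in_set[OF assms(4,5)] .
  then have "p \<in> S" "S \<noteq> {}" using assms(3) by auto
  have dist_zp: "norm (z - p) = infdist z X"
    unfolding p_def using norm_sub_closest_point_eq_infdist[OF assms(4,5)] .
  have dist_q: "norm (z - h - q) = infdist (z - h) S"
    unfolding q_def using norm_sub_closest_point_eq_infdist[OF assms(2) \<open>S \<noteq> {}\<close>] .
  have "(infdist q X)^2 \<le> (norm (q - p))^2"
    using infdist_le[OF \<open>p \<in> X\<close>, of q] by (simp add: dist_norm power_mono infdist_nonneg)
  moreover have "(norm (z - h - q))^2 + (norm (q - p))^2 \<le> (norm (z - h - p))^2"
    unfolding q_def by (rule closest_point_pythagoras[OF assms(1,2) \<open>p \<in> S\<close>])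
  moreover have "(norm (z - h - p))^2 \<le> (1 + \<epsilon>) * (infdist z X)^2 + (1 + 1 / \<epsilon>) * (norm h)^2"
  proof -
    have "(norm (z - h - p))^2 = (norm (z - p))^2 - 2 * inner (z - p) h + (norm h)^2"
      by (simp add: power2_norm_eq_inner inner_diff inner_commute algebra_simps)
    moreover have "- inner (z - p) h \<le> norm (z - p) * norm h"
      using Cauchy_Schwarz_ineq2[of "z - p" h] by simp
    moreover have "2 * norm (z - p) * norm h \<le> \<epsilon> * (norm (z - p))^2 + (norm h)^2 / \<epsilon>"
      using young_sq[OF assms(6)] .
    ultimately show ?thesis using dist_zp by (simp add: algebra_simps)
  qed
  moreover have "(infdist z S)^2 / 2 \<le> (norm (z - h - q))^2 + (norm h)^2"
  proof -
    have "infdist z S \<le> norm (z - h - q) + norm h"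
      using infdist_triangle[of z S "z - h"] dist_q by (simp add: dist_norm)
    then have "(infdist z S)^2 \<le> (norm (z - h - q) + norm h)^2"
      by (rule power_mono[OF _ infdist_nonneg])
    also have "\<dots> \<le> 2 * ((norm (z - h - q))^2 + (norm h)^2)"
      by (rule power2_add_le)
    finally show ?thesis by simp
  qed
  ultimately show ?thesis unfolding q_def by (simp add: algebra_simps)
qed

lemma norm_le_infdist_add_Sup_norm:
  fixes X :: "'a::real_normed_vector set"
  assumes "bounded X" "X \<noteq> {}"
  shows "norm z \<le> infdist z X + (SUP p\<in>X. norm p)"
proof -
  have bdd: "bdd_above (norm ` X)" using assms(1) by (simp add: bdd_above_norm)
  have "norm z - (SUP p\<in>X. norm p) \<le> dist z p" if "p \<in> X" for p
    using norm_triangle_sub[of z p] cSUP_upper[OF that bdd] by (simp add: dist_norm norm_minus_commute)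
  then have "norm z - (SUP p\<in>X. norm p) \<le> (INF p\<in>X. dist z p)"
    using assms(2) by (intro cINF_greatest) auto
  then show ?thesis using assms(2) by (simp add: infdist_notempty)
qed

lemma norm_diff_sq_le_imp_bounded:
  fixes S :: "'a::real_normed_vector set"
  assumes "\<forall>u\<in>S. \<forall>v\<in>S. (norm (u - v))^2 \<le> D^2"
  shows "bounded S"
proof (cases "S = {}")
  case False
  then obtain p where "p \<in> S" by auto
  have "S \<subseteq> cball p \<bar>D\<bar>"
  proof
    fix u assume "u \<in> S"
    then have "(norm (u - p))^2 \<le> \<bar>D\<bar>^2" using assms \<open>p \<in> S\<close> by simp
    then have "norm (u - p) \<le> \<bar>D\<bar>" by (rule power2_le_imp_le) simp
    then show "u \<in> cball p \<bar>D\<bar>" by (simp add: dist_norm norm_minus_commute)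
  qed
  then show ?thesis by (rule bounded_subset[OF bounded_cball])
qed simp

lemma infdist_sq_le_sum_if_le_Max:
  fixes X :: "'a::euclidean_space set"
  assumes "finite I" "I \<noteq> {}" "closed X" "X \<noteq> {}" "\<And>i. i \<in> I \<Longrightarrow> closed (S i) \<and> X \<subseteq> S i"
    and "0 \<le> \<eta>" "(norm (z - closest_point X z))^2 \<le> \<eta> * (MAX i\<in>I. (norm (z - closest_point (S i) z))^2)"
  shows "(infdist z X)^2 \<le> \<eta> * (\<Sum>i\<in>I. (infdist z (S i))^2)"
proof -
  have "(norm (z - closest_point (S i) z))^2 \<le> (\<Sum>i\<in>I. (infdist z (S i))^2)" if "i \<in> I" for i
  proof -
    have "S i \<noteq> {}" using assms(4,5) that by blast
    then show ?thesis
      using that assms(1,5) norm_sub_closest_point_eq_infdist[of "S i" z]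
      by (simp add: member_le_sum[where f = "\<lambda>i. (infdist z (S i))^2"])
  qed
  then have "(MAX i\<in>I. (norm (z - closest_point (S i) z))^2) \<le> (\<Sum>i\<in>I. (infdist z (S i))^2)"
    using assms(1,2) by (simp add: Max_le_iff)
  then have "\<eta> * (MAX i\<in>I. (norm (z - closest_point (S i) z))^2) \<le> \<eta> * (\<Sum>i\<in>I. (infdist z (S i))^2)"
    using assms(6) by (rule mult_left_mono)
  then show ?thesis
    using assms(7) norm_sub_closest_point_eq_infdist[OF assms(3,4)] by simp
qed

lemma infdist_convex_combination_le:
  fixes X :: "'a::euclidean_space set"
  assumes "convex X" "closed X" "X \<noteq> {}" "finite I" "\<And>i. i \<in> I \<Longrightarrow> w i \<ge> 0" "sum w I = 1"
  shows "infdist (\<Sum>i\<in>I. w i *\<^sub>R z i) X \<le> (\<Sum>i\<in>I. w i * infdist (z i) X)"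
proof -
  define p where "p i = closest_point X (z i)" for i
  have "p i \<in> X" for i unfolding p_def using closest_point_in_set[OF assms(2,3)] .
  then have "(\<Sum>i\<in>I. w i *\<^sub>R p i) \<in> X" using convex_sum[OF assms(4,1,6)] assms(5) by auto
  then have "infdist (\<Sum>i\<in>I. w i *\<^sub>R z i) X \<le> norm ((\<Sum>i\<in>I. w i *\<^sub>R z i) - (\<Sum>i\<in>I. w i *\<^sub>R p i))"
    by (metis infdist_le dist_norm)
  also have "\<dots> = norm (\<Sum>i\<in>I. w i *\<^sub>R (z i - p i))"
    by (simp add: sum_subtractf scaleR_diff_right)
  also have "\<dots> \<le> (\<Sum>i\<in>I. norm (w i *\<^sub>R (z i - p i)))"
    by (rule norm_sum)
  also have "\<dots> = (\<Sum>i\<in>I. w i * norm (z i - p i))"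
    using assms(5) by (intro sum.cong) auto
  also have "\<dots> = (\<Sum>i\<in>I. w i * infdist (z i) X)"
    unfolding p_def using norm_sub_closest_point_eq_infdist[OF assms(2,3)] by simp
  finally show ?thesis .
qed

lemma infdist_wavg_le:
  fixes X :: "(real^'n) set" and kb K :: nat
  assumes "convex X" "closed X" "X \<noteq> {}" "\<And>k. 0 < \<gamma> k"
  defines "I \<equiv> {kb + K div 2 .. kb + K}"
  shows "infdist (wavg \<gamma> x kb K \<omega>) X \<le> (\<Sum>k\<in>I. \<gamma> k / (\<Sum>j\<in>I. \<gamma> j) * infdist (x k \<omega>) X)"
proof -
  define S where "S = (\<Sum>j\<in>I. \<gamma> j)"
  have "0 < S" unfolding S_def I_def using assms(4) by (intro sum_pos) auto
  have weights: "\<And>k. 0 \<le> \<gamma> k / S" "(\<Sum>k\<in>I. \<gamma> k / S) = 1"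
    using \<open>0 < S\<close> assms(4) unfolding S_def by (auto intro: less_imp_le simp flip: sum_divide_distrib)
  have "wavg \<gamma> x kb K \<omega> = (\<Sum>k\<in>I. (\<gamma> k / S) *\<^sub>R x k \<omega>)"
    unfolding wavg_def I_def S_def by (simp add: scaleR_sum_right)
  also have "infdist \<dots> X \<le> (\<Sum>k\<in>I. \<gamma> k / S * infdist (x k \<omega>) X)"
    using assms(1-3) weights unfolding I_def by (intro infdist_convex_combination_le) auto
  finally show ?thesis unfolding S_def .
qed

section \<open>Real sequences\<close>

lemma two_step_recursion_bounded:
  fixes u a :: "nat \<Rightarrow> real"
  assumes u_nonneg: "\<And>k. u k \<ge> 0" and c: "0 < c" "c \<le> 1"
    and a_lim: "a \<longlonglongrightarrow> 0" and a_nonneg: "\<And>k. a k \<ge> 0"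
    and rec: "\<And>k. u (Suc (Suc k)) \<le> (1 - c) * u (Suc k) + a k * (1 + u (Suc k) + u k)"
  shows "\<exists>B. \<forall>k. u k \<le> B"
proof -
  obtain N where N: "\<And>k. k \<ge> N \<Longrightarrow> a k < c / 4"
    using order_tendstoD(2)[OF a_lim, of "c / 4"] c by (auto simp: eventually_sequentially)
  define B where "B = max (1 / 2) (Max (u ` {..Suc N}))"
  have "B \<ge> 1 / 2" unfolding B_def by simp
  have init: "u k \<le> B" if "k \<le> Suc N" for k
    unfolding B_def using that by (intro max.coboundedI2 Max_ge) auto
  \<comment> \<open>Once a k < c/4, the interval [0, B] is invariant because B \<ge> 1/2.\<close>
  have "u k \<le> B \<and> u (Suc k) \<le> B" if "k \<ge> N" for k
    using that
  proof (induction k rule: dec_induct)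
    case base
    then show ?case using init by simp
  next
    case (step k)
    have "(1 - c) * u (Suc k) \<le> (1 - c) * B"
      using step c by (intro mult_left_mono) auto
    moreover have "a k * (1 + u (Suc k) + u k) \<le> (c / 4) * (1 + B + B)"
      using step N[OF step(1)] a_nonneg[of k] u_nonneg[of k] u_nonneg[of "Suc k"]
      by (intro mult_mono) auto
    ultimately have "u (Suc (Suc k)) \<le> (1 - c) * B + (c / 4) * (1 + B + B)"
      using rec[of k] by linarith
    also have "\<dots> \<le> B" using \<open>B \<ge> 1 / 2\<close> c by (simp add: algebra_simps)
    finally show ?case using step by simp
  qed
  then have "u k \<le> B" for k
    using init[of k] by (cases "k \<le> Suc N") auto
  then show ?thesis by blast
qed

lemma two_step_recursion_linear:
  fixes u a :: "nat \<Rightarrow> real"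
  assumes u_nonneg: "\<And>k. u k \<ge> 0" and c: "0 < c" "c \<le> 1"
    and a_lim: "a \<longlonglongrightarrow> 0" and a_nonneg: "\<And>k. a k \<ge> 0"
    and rec: "\<And>k. u (Suc (Suc k)) \<le> (1 - c) * u (Suc k) + a k * (1 + u (Suc k) + u k)"
  shows "\<exists>A\<ge>0. \<forall>k. u (Suc (Suc k)) \<le> (1 - c) * u (Suc k) + A * a k"
proof -
  obtain B where B: "\<And>k. u k \<le> B" using two_step_recursion_bounded[OF assms] by blast
  have "a k * (1 + u (Suc k) + u k) \<le> (1 + 2 * B) * a k" for k
    using B[of k] B[of "Suc k"] a_nonneg[of k] mult_left_mono[of "1 + u (Suc k) + u k" "1 + 2 * B"]
    by (simp add: mult.commute)
  then have "u (Suc (Suc k)) \<le> (1 - c) * u (Suc k) + (1 + 2 * B) * a k" for k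
    using rec[of k] by (smt (verit))
  then show ?thesis
    using B[of 0] u_nonneg[of 0] by (intro exI[of _ "1 + 2 * B"]) auto
qed

lemma two_step_recursion_summable:
  fixes u a :: "nat \<Rightarrow> real"
  assumes u_nonneg: "\<And>k. u k \<ge> 0" and c: "0 < c" "c \<le> 1"
    and a_summable: "summable a" and a_nonneg: "\<And>k. a k \<ge> 0"
    and rec: "\<And>k. u (Suc (Suc k)) \<le> (1 - c) * u (Suc k) + a k * (1 + u (Suc k) + u k)"
  shows "summable u"
proof -
  obtain A where A: "A \<ge> 0" "\<And>k. u (Suc (Suc k)) \<le> (1 - c) * u (Suc k) + A * a k"
    using two_step_recursion_linear[OF u_nonneg c summable_LIMSEQ_zero[OF a_summable] a_nonneg rec]
    by blast
  have "c * (\<Sum>k<n. u (Suc k)) \<le> u 1 + A * suminf a" for n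
  proof -
    have "(\<Sum>k<n. u (Suc (Suc k))) \<le> (\<Sum>k<n. (1 - c) * u (Suc k) + A * a k)"
      by (intro sum_mono A(2))
    also have "\<dots> = (1 - c) * (\<Sum>k<n. u (Suc k)) + A * (\<Sum>k<n. a k)"
      by (simp add: sum.distrib sum_distrib_left)
    also have "A * (\<Sum>k<n. a k) \<le> A * suminf a"
      using A(1) sum_le_suminf[OF a_summable, of "{..<n}"] a_nonneg by (simp add: mult_left_mono)
    finally have "(\<Sum>k<n. u (Suc (Suc k))) \<le> (1 - c) * (\<Sum>k<n. u (Suc k)) + A * suminf a"
      by simp
    moreover have "(\<Sum>k<n. u (Suc k)) \<le> u 1 + (\<Sum>k<n. u (Suc (Suc k)))"
      using sum.lessThan_Suc_shift[of "\<lambda>k. u (Suc k)" n] u_nonneg[of "Suc n"] by simp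
    ultimately show ?thesis by (simp add: algebra_simps)
  qed
  then have "summable (\<lambda>k. u (Suc k))"
    using c u_nonneg
    by (intro summableI_nonneg_bounded[where x = "(u 1 + A * suminf a) / c"]) (auto simp: field_simps)
  then show ?thesis by (simp add: summable_Suc_iff)
qed

lemma one_step_recursion_rate:
  fixes E g :: "nat \<Rightarrow> real"
  assumes E_nonneg: "\<And>k. E k \<ge> 0" and c: "0 < c" "c \<le> 1" and A: "A \<ge> 0" and g_pos: "\<And>k. g k > 0"
    and rec: "\<And>k. E (Suc k) \<le> (1 - c) * E k + A * g k"
    and slow: "\<forall>\<^sub>F k in sequentially. (1 - c / 2) * g k \<le> g (Suc k)"
  shows "\<exists>B>0. \<forall>k. E k \<le> B * g k"
proof -
  obtain N where N: "\<And>k. k \<ge> N \<Longrightarrow> (1 - c / 2) * g k \<le> g (Suc k)"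
    using slow by (auto simp: eventually_sequentially)
  define B where "B = max (2 * A / c + 1) (Max ((\<lambda>k. E k / g k) ` {..N}))"
  have "B > 0" unfolding B_def using A c by (intro max.strict_coboundedI1) (simp add: field_simps)
  have "A \<le> c * B / 2" unfolding B_def using A c by (simp add: field_simps max_def)
  have init: "E k \<le> B * g k" if "k \<le> N" for k
  proof -
    have "E k / g k \<le> B" unfolding B_def using that by (intro max.coboundedI2 Max_ge) auto
    then show ?thesis using g_pos[of k] by (simp add: field_simps)
  qed
  \<comment> \<open>The bound is inherited because A \<le> c B / 2 and g shrinks by at most the factor 1 - c / 2.\<close>
  have "E k \<le> B * g k" if "k \<ge> N" for k
    using that
  proof (induction k rule: dec_induct)
    case base
    then show ?case using init by simp
  next
    case (step k)
    have "E (Suc k) \<le> (1 - c) * (B * g k) + (c * B / 2) * g k"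
      using rec[of k] step c \<open>A \<le> c * B / 2\<close> g_pos[of k]
      by (smt (verit, best) mult_left_mono mult_right_mono)
    also have "\<dots> = B * ((1 - c / 2) * g k)" by (simp add: algebra_simps)
    also have "\<dots> \<le> B * g (Suc k)" using N[OF step(1)] \<open>B > 0\<close> by simp
    finally show ?case .
  qed
  then show ?thesis using init \<open>B > 0\<close> by (metis nle_le)
qed

lemma eventually_inverse_powr_Suc_ge:
  fixes t c :: real
  assumes "0 < c" "c \<le> 1"
  shows "\<forall>\<^sub>F k in sequentially. (1 - c / 2) * (1 / real k powr t) \<le> 1 / real (Suc k) powr t"
proof -
  have "(\<lambda>k. 1 + 1 / real k) \<longlonglongrightarrow> 1 + 0"
    by (intro tendsto_add tendsto_const lim_const_over_n)
  moreover have "\<forall>\<^sub>F k in sequentially. 1 + 1 / real k = real (Suc k) / real k"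
    using eventually_gt_at_top[of 0] by eventually_elim (simp add: field_simps)
  ultimately have "(\<lambda>k. real (Suc k) / real k) \<longlonglongrightarrow> 1"
    by (simp add: tendsto_cong)
  then have "(\<lambda>k. (real (Suc k) / real k) powr t) \<longlonglongrightarrow> 1 powr t"
    by (rule tendsto_powr) auto
  then have "\<forall>\<^sub>F k in sequentially. (real (Suc k) / real k) powr t < 1 / (1 - c / 2)"
    using assms by (intro order_tendstoD(2)) (auto simp: field_simps)
  then show ?thesis using eventually_gt_at_top[of 0]
  proof eventually_elim
    case (elim k)
    have "(1 - c / 2) * real (Suc k) powr t \<le> real k powr t"
      using elim assms by (simp add: powr_divide field_simps)
    then show ?case using elim by (simp add: field_simps)
  qed
qed

lemma kbar_ge_1:
  assumes "0 < \<beta>" "\<beta> < 2" "0 < t"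
  shows "1 \<le> kbar \<beta> t"
proof -
  define b where "b = 1 - \<beta> / 2"
  define p where "p = b powr (1 / t)"
  have "0 < b" "b < 1" unfolding b_def using assms by simp_all
  then have "0 < p" "p < 1"
    unfolding p_def using powr_less_mono2[of "1 / t" b 1] assms(3) by simp_all
  then have "1 < \<lceil>1 / (1 - p)\<rceil>" by (simp add: field_simps)
  then have "1 \<le> \<lceil>1 / (1 - p) - 1\<rceil>" by simp
  from nat_mono[OF this] show ?thesis unfolding kbar_def p_def b_def by simp
qed

section \<open>Integrals\<close>

lemma borel_measurable_infdist [measurable (raw)]:
  fixes f :: "'a \<Rightarrow> 'b::metric_space"
  assumes "f \<in> borel_measurable M"
  shows "(\<lambda>\<omega>. infdist (f \<omega>) S) \<in> borel_measurable M"
proof -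
  have "(\<lambda>z. infdist z S) \<in> borel_measurable borel"
    by (intro borel_measurable_continuous_onI continuous_on_infdist continuous_on_id)
  then show ?thesis using assms by (rule measurable_compose[rotated])
qed

lemma ennreal_add_le_ennreal_imp:
  assumes "a + ennreal p \<le> ennreal q" "0 \<le> p" "0 \<le> q"
  shows "a \<noteq> \<infinity>" and "enn2real a + p \<le> q"
proof -
  have "a \<le> ennreal q" using assms(1) by (rule order_trans[rotated]) (simp add: add_increasing2)
  then have "a < top" using ennreal_less_top[of q] by (rule order.strict_trans1)
  then show "a \<noteq> \<infinity>" by (auto simp: infinity_ennreal_def)
  then obtain r where r: "a = ennreal r" "0 \<le> r" by (cases a rule: ennreal_cases) auto
  have "ennreal (r + p) = a + ennreal p" unfolding r(1) using r(2) assms(2) by (rule ennreal_plus)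
  then have "ennreal (r + p) \<le> ennreal q" using assms(1) by simp
  then have "r + p \<le> q" using assms(3) by (simp only: ennreal_le_iff)
  then show "enn2real a + p \<le> q" using r by simp
qed

lemma (in prob_space) nn_integral_le_sqrt:
  assumes "f \<in> borel_measurable M" "0 < V" "(\<integral>\<^sup>+\<omega>. ennreal ((f \<omega>)^2) \<partial>M) \<le> ennreal V"
  shows "(\<integral>\<^sup>+\<omega>. ennreal (f \<omega>) \<partial>M) \<le> ennreal (sqrt V)"
proof -
  define s where "s = sqrt V"
  have "0 < s" unfolding s_def using assms(2) by simp
  have "ennreal (f \<omega>) \<le> ennreal ((f \<omega>)^2) * ennreal (1 / (2 * s)) + ennreal (s / 2)" for \<omega>
  proof -
    have "f \<omega> \<le> (f \<omega>)^2 * (1 / (2 * s)) + s / 2"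
      using sum_squares_bound[of s "f \<omega>"] \<open>0 < s\<close> by (simp add: field_simps power2_eq_square)
    then have "ennreal (f \<omega>) \<le> ennreal ((f \<omega>)^2 * (1 / (2 * s)) + s / 2)" by (rule ennreal_leI)
    also have "\<dots> = ennreal ((f \<omega>)^2) * ennreal (1 / (2 * s)) + ennreal (s / 2)"
      using \<open>0 < s\<close> by (simp add: ennreal_plus ennreal_mult[symmetric])
    finally show ?thesis .
  qed
  then have "(\<integral>\<^sup>+\<omega>. ennreal (f \<omega>) \<partial>M)
      \<le> (\<integral>\<^sup>+\<omega>. ennreal ((f \<omega>)^2) * ennreal (1 / (2 * s)) + ennreal (s / 2) \<partial>M)"
    by (rule nn_integral_mono)
  also have "\<dots> = (\<integral>\<^sup>+\<omega>. ennreal ((f \<omega>)^2) \<partial>M) * ennreal (1 / (2 * s)) + ennreal (s / 2)"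
    using assms(1) by (simp add: nn_integral_add nn_integral_multc emeasure_space_1)
  also have "\<dots> \<le> ennreal V * ennreal (1 / (2 * s)) + ennreal (s / 2)"
    using assms(3) by (intro add_mono mult_right_mono) auto
  also have "\<dots> = ennreal (V / (2 * s) + s / 2)"
    using \<open>0 < s\<close> assms(2) by (simp add: ennreal_plus ennreal_mult[symmetric])
  also have "V / (2 * s) + s / 2 = sqrt V"
    using assms(2) unfolding s_def by (simp add: field_simps flip: power2_eq_square)
  finally show ?thesis .
qed

lemma (in sigma_finite_subalgebra) nn_integral_mult_indicator_ge:
  assumes [measurable]: "g \<in> borel_measurable F" "A \<in> sets M"
    and lower: "AE \<omega> in M. p \<le> real_cond_exp M F (indicator A) \<omega>"
  shows "(\<integral>\<^sup>+\<omega>. g \<omega> * ennreal p \<partial>M) \<le> (\<integral>\<^sup>+\<omega>. g \<omega> * ennreal (indicator A \<omega>) \<partial>M)"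
proof -
  let ?P = "nn_cond_exp M F (\<lambda>\<omega>. ennreal (indicator A \<omega>))"
  have "AE \<omega> in M. ennreal p \<le> ?P \<omega>"
    using lower
  proof eventually_elim
    case (elim \<omega>)
    have "real_cond_exp M F (indicator A) \<omega> \<le> enn2real (?P \<omega>)"
      unfolding real_cond_exp_def by simp
    then have "ennreal p \<le> ennreal (enn2real (?P \<omega>))"
      using elim by (intro ennreal_leI) linarith
    also have "\<dots> \<le> ?P \<omega>"
      by (simp add: ennreal_enn2real_if)
    finally show ?case .
  qed
  then have "(\<integral>\<^sup>+\<omega>. g \<omega> * ennreal p \<partial>M) \<le> (\<integral>\<^sup>+\<omega>. g \<omega> * ?P \<omega> \<partial>M)"
    by (intro nn_integral_mono_AE) (auto elim!: eventually_mono intro: mult_left_mono)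
  also have "\<dots> = (\<integral>\<^sup>+\<omega>. g \<omega> * ennreal (indicator A \<omega>) \<partial>M)"
    by (rule nn_cond_exp_intg) measurable
  finally show ?thesis .
qed

lemma nn_integral_convex_combination_le:
  fixes f :: "'i \<Rightarrow> 'a \<Rightarrow> real"
  assumes "finite I" "\<And>i. i \<in> I \<Longrightarrow> 0 \<le> w i" "sum w I = 1" "0 \<le> C"
    and [measurable]: "\<And>i. f i \<in> borel_measurable M" and f_nonneg: "\<And>i \<omega>. 0 \<le> f i \<omega>"
    and bound: "\<And>i. i \<in> I \<Longrightarrow> (\<integral>\<^sup>+\<omega>. ennreal (f i \<omega>) \<partial>M) \<le> ennreal C"
  shows "(\<integral>\<^sup>+\<omega>. ennreal (\<Sum>i\<in>I. w i * f i \<omega>) \<partial>M) \<le> ennreal C"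
proof -
  have "(\<integral>\<^sup>+\<omega>. ennreal (\<Sum>i\<in>I. w i * f i \<omega>) \<partial>M) = (\<integral>\<^sup>+\<omega>. (\<Sum>i\<in>I. ennreal (w i) * ennreal (f i \<omega>)) \<partial>M)"
    using assms(2) f_nonneg by (intro nn_integral_cong) (simp add: ennreal_mult flip: sum_ennreal)
  also have "\<dots> = (\<Sum>i\<in>I. ennreal (w i) * (\<integral>\<^sup>+\<omega>. ennreal (f i \<omega>) \<partial>M))"
    by (simp add: nn_integral_sum nn_integral_cmult)
  also have "\<dots> \<le> (\<Sum>i\<in>I. ennreal (w i) * ennreal C)"
    using bound by (intro sum_mono mult_left_mono) auto
  also have "\<dots> = ennreal (\<Sum>i\<in>I. w i * C)"
    using assms(2,4) by (simp add: ennreal_mult flip: sum_ennreal)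
  also have "(\<Sum>i\<in>I. w i * C) = C"
    using assms(3) by (simp flip: sum_distrib_right)
  finally show ?thesis .
qed

lemma nn_integral_infdist_wavg_le:
  fixes X :: "(real^'n) set" and x :: "nat \<Rightarrow> 'a \<Rightarrow> real^'n"
  assumes X: "convex X" "closed X" "X \<noteq> {}" and [measurable]: "\<And>k. x k \<in> borel_measurable M"
    and \<gamma>_pos: "\<And>k. 0 < \<gamma> k" and "0 \<le> B" "1 \<le> K"
    and bound: "\<And>k. (\<integral>\<^sup>+\<omega>. ennreal (infdist (x k \<omega>) X) \<partial>M) \<le> ennreal (B / sqrt (real k + 1))"
  shows "(\<integral>\<^sup>+\<omega>. ennreal (infdist (wavg \<gamma> x kb K \<omega>) X) \<partial>M) \<le> ennreal (sqrt 2 * B / sqrt (real K))"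
proof -
  define I where "I = {kb + K div 2 .. kb + K}"
  define w where "w k = \<gamma> k / (\<Sum>j\<in>I. \<gamma> j)" for k
  define C where "C = sqrt 2 * B / sqrt (real K)"
  have "0 < (\<Sum>j\<in>I. \<gamma> j)" unfolding I_def using \<gamma>_pos by (intro sum_pos) auto
  then have w_nonneg: "0 \<le> w k" and "sum w I = 1" for k
    unfolding w_def using \<gamma>_pos[of k] by (simp_all flip: sum_divide_distrib)
  have "0 \<le> C" unfolding C_def using \<open>0 \<le> B\<close> by simp
  \<comment> \<open>The window starts at K div 2, so every index in it has K \<le> 2 (k + 1).\<close>
  have window: "(\<integral>\<^sup>+\<omega>. ennreal (infdist (x k \<omega>) X) \<partial>M) \<le> ennreal C" if "k \<in> I" for k
  proof -
    have "K \<le> 2 * (k + 1)" using that unfolding I_def by simp presburger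
    then have "sqrt (real K) \<le> sqrt 2 * sqrt (real k + 1)"
      by (simp flip: real_sqrt_mult)
    then have "B / sqrt (real k + 1) \<le> C"
      unfolding C_def using \<open>0 \<le> B\<close> \<open>1 \<le> K\<close> by (simp add: field_simps mult_left_mono)
    then show ?thesis using bound[of k] ennreal_leI order_trans by blast
  qed
  have "(\<integral>\<^sup>+\<omega>. ennreal (infdist (wavg \<gamma> x kb K \<omega>) X) \<partial>M)
      \<le> (\<integral>\<^sup>+\<omega>. ennreal (\<Sum>k\<in>I. w k * infdist (x k \<omega>) X) \<partial>M)"
    using infdist_wavg_le[OF X \<gamma>_pos, where x = x and kb = kb and K = K]
    unfolding I_def w_def by (intro nn_integral_mono ennreal_leI) auto
  also have "\<dots> \<le> ennreal C"
    unfolding I_def using w_nonneg \<open>sum w I = 1\<close> \<open>0 \<le> C\<close> window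
    by (intro nn_integral_convex_combination_le) (auto simp: I_def infdist_nonneg)
  finally show ?thesis unfolding C_def .
qed

section \<open>The randomized projection scheme\<close>

text \<open>The hypotheses of the theorem in the form the argument uses: the error bound (A5) with a sum
  over the sets in place of the maximum, one sampling bound \<rho> for all sets in (A6), and only the
  second-moment part of (A4).\<close>

locale random_projection_scheme = prob_space M
  for M :: "'a measure" and Filt :: "nat \<Rightarrow> 'a measure"
    and m :: nat and Xs :: "nat \<Rightarrow> (real^'n) set" and X :: "(real^'n) set"
    and F :: "real^'n \<Rightarrow> real^'n" and L :: real
    and G :: "real^'n \<Rightarrow> 'w \<Rightarrow> real^'n" and om :: "nat \<Rightarrow> 'a \<Rightarrow> 'w" and \<nu>1 \<nu>2 :: real
    and \<eta> \<rho> :: real and l :: "nat \<Rightarrow> 'a \<Rightarrow> nat" and \<gamma> :: "nat \<Rightarrow> real"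
    and x :: "nat \<Rightarrow> 'a \<Rightarrow> real^'n" and xm1 x0 :: "real^'n" +
  assumes subalgebra_Filt: "subalgebra M (Filt k)"
    and m_pos: "1 \<le> m"
    and Xs_closed: "i \<in> {1..m} \<Longrightarrow> closed (Xs i)"
    and Xs_convex: "i \<in> {1..m} \<Longrightarrow> convex (Xs i)"
    and X_subset_Xs: "i \<in> {1..m} \<Longrightarrow> X \<subseteq> Xs i"
    and X_closed: "closed X" and X_convex: "convex X" and X_nonempty: "X \<noteq> {}"
    and X_bounded: "bounded X"
    and F_lipschitz: "lipschitz_on L UNIV F"
    and noise_second_moment: "AE \<omega> in M. nn_cond_exp M (Filt k)
        (\<lambda>\<omega>. ennreal ((norm (G (extrap x xm1 k \<omega>) (om k \<omega>) - F (extrap x xm1 k \<omega>)))^2)) \<omega>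
      \<le> ennreal (\<nu>1^2 * (norm (extrap x xm1 k \<omega>))^2 + \<nu>2^2)"
    and \<eta>_pos: "0 < \<eta>"
    and error_bound: "(infdist z X)^2 \<le> \<eta> * (\<Sum>i\<in>{1..m}. (infdist z (Xs i))^2)"
    and \<rho>_pos: "0 < \<rho>" and \<rho>_le_1: "\<rho> \<le> 1"
    and sampling: "i \<in> {1..m} \<Longrightarrow> AE \<omega> in M.
        \<rho> / real m \<le> real_cond_exp M (Filt k) (indicator {\<omega> \<in> space M. l k \<omega> = i}) \<omega>"
    and l_range: "\<omega> \<in> space M \<Longrightarrow> l k \<omega> \<in> {1..m}"
    and x_adapted: "x k \<in> borel_measurable (Filt k)"
    and l_measurable [measurable]: "l k \<in> measurable M (count_space UNIV)"
    and G_y_measurable [measurable]: "(\<lambda>\<omega>. G (extrap x xm1 k \<omega>) (om k \<omega>)) \<in> borel_measurable M"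
    and step_pos: "0 < \<gamma> k"
    and x_0: "\<omega> \<in> space M \<Longrightarrow> x 0 \<omega> = x0"
    and x_Suc: "\<omega> \<in> space M \<Longrightarrow>
        x (Suc k) \<omega> = closest_point (Xs (l k \<omega>)) (x k \<omega> - \<gamma> k *\<^sub>R G (extrap x xm1 k \<omega>) (om k \<omega>))"
begin

abbreviation G_y :: "nat \<Rightarrow> 'a \<Rightarrow> real^'n" where
  "G_y k \<omega> \<equiv> G (extrap x xm1 k \<omega>) (om k \<omega>)"

definition \<kappa> :: real where
  "\<kappa> = \<rho> / (4 * real m * \<eta>)"

definition msd :: "nat \<Rightarrow> ennreal" where
  "msd k = (\<integral>\<^sup>+\<omega>. ennreal ((infdist (x k \<omega>) X)^2) \<partial>M)"

definition msd_prev :: "nat \<Rightarrow> ennreal" where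
  "msd_prev k = (\<integral>\<^sup>+\<omega>. ennreal ((infdist (prev_iter x xm1 k \<omega>) X)^2) \<partial>M)"

lemma m_\<eta>_ge_1: "1 \<le> real m * \<eta>"
proof -
  have "X \<noteq> UNIV" using X_bounded not_bounded_UNIV by auto
  then obtain z where "z \<notin> X" by auto
  then have "0 < infdist z X" by (rule infdist_pos_not_in_closed[OF X_closed X_nonempty])
  then have d_pos: "0 < (infdist z X)^2" by simp
  have "(\<Sum>i\<in>{1..m}. (infdist z (Xs i))^2) \<le> (\<Sum>i\<in>{1..m}. (infdist z X)^2)"
    using X_subset_Xs X_nonempty by (intro sum_mono power_mono infdist_mono) (auto simp: infdist_nonneg)
  then have "\<eta> * (\<Sum>i\<in>{1..m}. (infdist z (Xs i))^2) \<le> \<eta> * (real m * (infdist z X)^2)"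
    using \<eta>_pos by (intro mult_left_mono) auto
  then have "1 * (infdist z X)^2 \<le> (real m * \<eta>) * (infdist z X)^2"
    using error_bound[of z] by (simp add: algebra_simps)
  then show ?thesis using d_pos by (rule mult_right_le_imp_le)
qed

lemma \<kappa>_pos: "0 < \<kappa>"
  unfolding \<kappa>_def using \<rho>_pos \<eta>_pos m_pos by simp

lemma \<kappa>_le_1: "\<kappa> \<le> 1"
  unfolding \<kappa>_def using \<rho>_le_1 \<rho>_pos m_\<eta>_ge_1 by (simp add: field_simps)

lemma kbar_rate_ge_1:
  assumes "0 < t"
  shows "1 \<le> kbar (1 - \<rho> / (32 * real m * \<eta>)) t"
proof -
  have "0 < real m * \<eta>" using m_\<eta>_ge_1 by linarith
  then have "0 < \<rho> / (32 * real m * \<eta>)" "\<rho> / (32 * real m * \<eta>) < 1"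
    using \<rho>_pos \<rho>_le_1 m_\<eta>_ge_1 by (simp_all add: field_simps)
  then show ?thesis using assms by (intro kbar_ge_1) linarith+
qed

lemma sigma_finite_subalgebra_Filt: "sigma_finite_subalgebra M (Filt k)"
  by (rule finite_measure_subalgebra_is_sigma_finite)
     (simp add: finite_measure_subalgebra_def finite_measure_subalgebra_axioms_def subalgebra_Filt)

lemma x_measurable [measurable]: "x k \<in> borel_measurable M"
  using measurable_from_subalg[OF subalgebra_Filt x_adapted] .

lemma prev_iter_measurable [measurable]: "prev_iter x xm1 k \<in> borel_measurable M"
  by (cases k) (simp_all add: prev_iter_def[abs_def])

lemma extrap_measurable [measurable]: "extrap x xm1 k \<in> borel_measurable M"
  unfolding extrap_def[abs_def] by measurable

lemma F_measurable [measurable]: "F \<in> borel_measurable borel"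
  using lipschitz_on_continuous_on[OF F_lipschitz] by (rule borel_measurable_continuous_onI)

lemma infdist_sampled_set_measurable [measurable]:
  "(\<lambda>\<omega>. infdist (x k \<omega>) (Xs (l k \<omega>))) \<in> borel_measurable M"
  by (rule measurable_compose_countable[where f = "\<lambda>i \<omega>. infdist (x k \<omega>) (Xs i)", OF _ l_measurable])
     measurable

lemma msd_prev_0: "msd_prev 0 = ennreal ((infdist xm1 X)^2)"
  unfolding msd_prev_def prev_iter_def by (simp add: emeasure_space_1)

lemma msd_prev_Suc: "msd_prev (Suc k) = msd k"
  unfolding msd_prev_def msd_def prev_iter_def by simp

lemma msd_0: "msd 0 = ennreal ((infdist x0 X)^2)"
proof -
  have "msd 0 = (\<integral>\<^sup>+\<omega>. ennreal ((infdist x0 X)^2) \<partial>M)"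
    unfolding msd_def by (rule nn_integral_cong) (simp add: x_0)
  then show ?thesis by (simp add: emeasure_space_1)
qed

lemma nn_integral_one_add_dist_sq:
  "(\<integral>\<^sup>+\<omega>. ennreal (1 + (infdist (x k \<omega>) X)^2 + (infdist (prev_iter x xm1 k \<omega>) X)^2) \<partial>M)
    = 1 + msd k + msd_prev k"
proof -
  have "(\<integral>\<^sup>+\<omega>. ennreal (1 + (infdist (x k \<omega>) X)^2 + (infdist (prev_iter x xm1 k \<omega>) X)^2) \<partial>M)
      = (\<integral>\<^sup>+\<omega>. 1 + ennreal ((infdist (x k \<omega>) X)^2) + ennreal ((infdist (prev_iter x xm1 k \<omega>) X)^2) \<partial>M)"
    by (intro nn_integral_cong) (simp add: ennreal_plus)
  also have "\<dots> = 1 + msd k + msd_prev k"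
    unfolding msd_def msd_prev_def by (simp add: nn_integral_add emeasure_space_1)
  finally show ?thesis .
qed

lemma norm_extrap_sq_le:
  "\<exists>A\<ge>0. \<forall>k \<omega>. (norm (extrap x xm1 k \<omega>))^2
      \<le> A * (1 + (infdist (x k \<omega>) X)^2 + (infdist (prev_iter x xm1 k \<omega>) X)^2)"
proof -
  define R where "R = (SUP p\<in>X. norm p)"
  obtain p where "p \<in> X" using X_nonempty by auto
  then have "norm p \<le> R"
    unfolding R_def using X_bounded by (intro cSUP_upper) (auto simp: bdd_above_norm)
  then have "0 \<le> R" using norm_ge_zero[of p] by linarith
  have norm_le: "norm z \<le> infdist z X + R" for z
    unfolding R_def using X_bounded X_nonempty by (rule norm_le_infdist_add_Sup_norm)
  have "(norm (extrap x xm1 k \<omega>))^2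
      \<le> (12 + 27 * R^2) * (1 + (infdist (x k \<omega>) X)^2 + (infdist (prev_iter x xm1 k \<omega>) X)^2)" for k \<omega>
  proof -
    define D where "D = infdist (x k \<omega>) X"
    define Dp where "Dp = infdist (prev_iter x xm1 k \<omega>) X"
    have "norm (extrap x xm1 k \<omega>) \<le> 2 * norm (x k \<omega>) + norm (prev_iter x xm1 k \<omega>)"
      unfolding extrap_def using norm_triangle_ineq4[of "2 *\<^sub>R x k \<omega>" "prev_iter x xm1 k \<omega>"] by simp
    also have "\<dots> \<le> 2 * D + Dp + 3 * R"
      using norm_le[of "x k \<omega>"] norm_le[of "prev_iter x xm1 k \<omega>"] unfolding D_def Dp_def by simp
    finally have "(norm (extrap x xm1 k \<omega>))^2 \<le> (2 * D + Dp + 3 * R)^2"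
      by (rule power_mono) simp
    also have "\<dots> \<le> 3 * ((2 * D)^2 + Dp^2 + (3 * R)^2)"
      using sum_squares_bound[of "2 * D" Dp] sum_squares_bound[of "2 * D" "3 * R"]
        sum_squares_bound[of Dp "3 * R"]
      by (simp add: power2_sum algebra_simps)
    also have "\<dots> \<le> (12 + 27 * R^2) * (1 + D^2 + Dp^2)"
      using zero_le_power2[of D] zero_le_power2[of Dp] mult_nonneg_nonneg[of "R^2" "D^2"]
        mult_nonneg_nonneg[of "R^2" "Dp^2"]
      by (simp add: power_mult_distrib algebra_simps)
    finally show ?thesis unfolding D_def Dp_def .
  qed
  then show ?thesis by (intro exI[of _ "12 + 27 * R^2"]) auto
qed

lemma norm_G_y_sq_le:
  "\<exists>A\<ge>0. \<forall>k \<omega>. (norm (G_y k \<omega>))^2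
      \<le> A * (1 + (infdist (x k \<omega>) X)^2 + (infdist (prev_iter x xm1 k \<omega>) X)^2)
        + 2 * (norm (G_y k \<omega> - F (extrap x xm1 k \<omega>)))^2"
proof -
  obtain Ay where "0 \<le> Ay" and y_le: "\<And>k \<omega>. (norm (extrap x xm1 k \<omega>))^2
      \<le> Ay * (1 + (infdist (x k \<omega>) X)^2 + (infdist (prev_iter x xm1 k \<omega>) X)^2)"
    using norm_extrap_sq_le by blast
  define A where "A = 4 * (norm (F 0))^2 + 4 * L^2 * Ay"
  have "(norm (G_y k \<omega>))^2 \<le> A * V + 2 * (norm (G_y k \<omega> - F (extrap x xm1 k \<omega>)))^2"
    if V_def: "V = 1 + (infdist (x k \<omega>) X)^2 + (infdist (prev_iter x xm1 k \<omega>) X)^2" for k \<omega> V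
  proof -
    let ?y = "extrap x xm1 k \<omega>"
    have "norm (F ?y) \<le> norm (F 0) + L * norm ?y"
      using lipschitz_onD[OF F_lipschitz, of ?y 0] norm_triangle_sub[of "F ?y" "F 0"]
      by (simp add: dist_norm)
    then have "(norm (F ?y))^2 \<le> (norm (F 0) + L * norm ?y)^2"
      by (rule power_mono) simp
    also have "\<dots> \<le> 2 * (norm (F 0))^2 + 2 * (L^2 * (norm ?y)^2)"
      using power2_add_le[of "norm (F 0)" "L * norm ?y"] by (simp add: power_mult_distrib)
    finally have F_y: "(norm (F ?y))^2 \<le> 2 * (norm (F 0))^2 + 2 * (L^2 * (norm ?y)^2)" .
    have "(norm (G_y k \<omega>))^2 \<le> (norm (F ?y) + norm (G_y k \<omega> - F ?y))^2"
      using norm_triangle_sub[of "G_y k \<omega>" "F ?y"] by (rule power_mono) simp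
    also have "\<dots> \<le> 2 * (norm (F ?y))^2 + 2 * (norm (G_y k \<omega> - F ?y))^2"
      using power2_add_le by simp
    finally have G_y: "(norm (G_y k \<omega>))^2 \<le> 2 * (norm (F ?y))^2 + 2 * (norm (G_y k \<omega> - F ?y))^2" .
    have "L^2 * (norm ?y)^2 \<le> L^2 * (Ay * V)"
      using y_le[of k \<omega>] unfolding V_def by (intro mult_left_mono) auto
    moreover have "(norm (F 0))^2 \<le> (norm (F 0))^2 * V"
      using mult_left_mono[of 1 V "(norm (F 0))^2"] unfolding V_def by simp
    moreover have "A * V = 4 * ((norm (F 0))^2 * V) + 4 * (L^2 * (Ay * V))"
      unfolding A_def by (simp add: algebra_simps)
    ultimately show ?thesis using F_y G_y by linarith
  qed
  moreover have "0 \<le> A" unfolding A_def using \<open>0 \<le> Ay\<close> by simp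
  ultimately show ?thesis by blast
qed

lemma noise_second_moment_le:
  "\<exists>A\<ge>0. \<forall>k. (\<integral>\<^sup>+\<omega>. ennreal ((norm (G_y k \<omega> - F (extrap x xm1 k \<omega>)))^2) \<partial>M)
      \<le> ennreal A * (1 + msd k + msd_prev k)"
proof -
  obtain Ay where "0 \<le> Ay" and y_le: "\<And>k \<omega>. (norm (extrap x xm1 k \<omega>))^2
      \<le> Ay * (1 + (infdist (x k \<omega>) X)^2 + (infdist (prev_iter x xm1 k \<omega>) X)^2)"
    using norm_extrap_sq_le by blast
  define A where "A = \<nu>1^2 * Ay + \<nu>2^2"
  have "0 \<le> A" unfolding A_def using \<open>0 \<le> Ay\<close> by simp
  have "(\<integral>\<^sup>+\<omega>. ennreal ((norm (G_y k \<omega> - F (extrap x xm1 k \<omega>)))^2) \<partial>M)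
      \<le> ennreal A * (1 + msd k + msd_prev k)" for k
  proof -
    define V where "V \<omega> = 1 + (infdist (x k \<omega>) X)^2 + (infdist (prev_iter x xm1 k \<omega>) X)^2" for \<omega>
    define W where "W \<omega> = ennreal ((norm (G_y k \<omega> - F (extrap x xm1 k \<omega>)))^2)" for \<omega>
    have V_ge_1: "1 \<le> V \<omega>" for \<omega> unfolding V_def by simp
    have [measurable]: "W \<in> borel_measurable M" unfolding W_def[abs_def] by measurable
    have "(\<integral>\<^sup>+\<omega>. W \<omega> \<partial>M) = (\<integral>\<^sup>+\<omega>. 1 * nn_cond_exp M (Filt k) W \<omega> \<partial>M)"
      using sigma_finite_subalgebra.nn_cond_exp_intg[OF sigma_finite_subalgebra_Filt, of "\<lambda>_. 1" k W]
      by simp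
    also have "\<dots> \<le> (\<integral>\<^sup>+\<omega>. ennreal A * ennreal (V \<omega>) \<partial>M)"
    proof (rule nn_integral_mono_AE)
      show "AE \<omega> in M. 1 * nn_cond_exp M (Filt k) W \<omega> \<le> ennreal A * ennreal (V \<omega>)"
        using noise_second_moment[of k]
      proof eventually_elim
        case (elim \<omega>)
        have "\<nu>1^2 * (norm (extrap x xm1 k \<omega>))^2 \<le> \<nu>1^2 * (Ay * V \<omega>)"
          using y_le[of k \<omega>] unfolding V_def by (intro mult_left_mono) auto
        moreover have "\<nu>2^2 \<le> \<nu>2^2 * V \<omega>"
          using mult_left_mono[OF V_ge_1[of \<omega>], of "\<nu>2^2"] by simp
        ultimately have "\<nu>1^2 * (norm (extrap x xm1 k \<omega>))^2 + \<nu>2^2 \<le> A * V \<omega>"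
          unfolding A_def distrib_right mult.assoc by linarith
        then have "ennreal (\<nu>1^2 * (norm (extrap x xm1 k \<omega>))^2 + \<nu>2^2) \<le> ennreal (A * V \<omega>)"
          by (rule ennreal_leI)
        also have "\<dots> = ennreal A * ennreal (V \<omega>)"
          using \<open>0 \<le> A\<close> V_ge_1[of \<omega>] by (simp add: ennreal_mult)
        finally show ?case using elim unfolding W_def by simp
      qed
    qed
    also have "\<dots> = ennreal A * (1 + msd k + msd_prev k)"
      unfolding V_def nn_integral_one_add_dist_sq[symmetric] by (simp add: nn_integral_cmult)
    finally show ?thesis unfolding W_def .
  qed
  then show ?thesis using \<open>0 \<le> A\<close> by blast
qed

lemma G_y_second_moment_le:
  "\<exists>A\<ge>0. \<forall>k. (\<integral>\<^sup>+\<omega>. ennreal ((norm (G_y k \<omega>))^2) \<partial>M) \<le> ennreal A * (1 + msd k + msd_prev k)"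
proof -
  obtain A1 where "0 \<le> A1" and pointwise: "\<And>k \<omega>. (norm (G_y k \<omega>))^2
      \<le> A1 * (1 + (infdist (x k \<omega>) X)^2 + (infdist (prev_iter x xm1 k \<omega>) X)^2)
        + 2 * (norm (G_y k \<omega> - F (extrap x xm1 k \<omega>)))^2"
    using norm_G_y_sq_le by blast
  obtain A2 where "0 \<le> A2" and noise: "\<And>k. (\<integral>\<^sup>+\<omega>. ennreal ((norm (G_y k \<omega> - F (extrap x xm1 k \<omega>)))^2) \<partial>M)
      \<le> ennreal A2 * (1 + msd k + msd_prev k)"
    using noise_second_moment_le by blast
  have "(\<integral>\<^sup>+\<omega>. ennreal ((norm (G_y k \<omega>))^2) \<partial>M) \<le> ennreal (A1 + 2 * A2) * (1 + msd k + msd_prev k)" for k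
  proof -
    define V where "V \<omega> = 1 + (infdist (x k \<omega>) X)^2 + (infdist (prev_iter x xm1 k \<omega>) X)^2" for \<omega>
    define W where "W \<omega> = ennreal ((norm (G_y k \<omega> - F (extrap x xm1 k \<omega>)))^2)" for \<omega>
    have [measurable]: "V \<in> borel_measurable M" "W \<in> borel_measurable M"
      unfolding V_def[abs_def] W_def[abs_def] by measurable
    have "ennreal ((norm (G_y k \<omega>))^2) \<le> ennreal A1 * ennreal (V \<omega>) + 2 * W \<omega>" for \<omega>
    proof -
      have "ennreal ((norm (G_y k \<omega>))^2) \<le> ennreal (A1 * V \<omega> + 2 * (norm (G_y k \<omega> - F (extrap x xm1 k \<omega>)))^2)"
        using pointwise[of k \<omega>] unfolding V_def by (rule ennreal_leI)
      also have "\<dots> = ennreal A1 * ennreal (V \<omega>) + 2 * W \<omega>"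
        unfolding W_def V_def using \<open>0 \<le> A1\<close> by (simp add: ennreal_plus ennreal_mult)
      finally show ?thesis .
    qed
    then have "(\<integral>\<^sup>+\<omega>. ennreal ((norm (G_y k \<omega>))^2) \<partial>M) \<le> (\<integral>\<^sup>+\<omega>. ennreal A1 * ennreal (V \<omega>) + 2 * W \<omega> \<partial>M)"
      by (rule nn_integral_mono)
    also have "\<dots> = ennreal A1 * (1 + msd k + msd_prev k) + 2 * (\<integral>\<^sup>+\<omega>. W \<omega> \<partial>M)"
      unfolding V_def nn_integral_one_add_dist_sq[symmetric] by (simp add: nn_integral_add nn_integral_cmult)
    also have "\<dots> \<le> ennreal A1 * (1 + msd k + msd_prev k) + 2 * (ennreal A2 * (1 + msd k + msd_prev k))"
      using noise[of k] unfolding W_def by (intro add_left_mono mult_left_mono) auto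
    also have "\<dots> = ennreal (A1 + 2 * A2) * (1 + msd k + msd_prev k)"
      using \<open>0 \<le> A1\<close> \<open>0 \<le> A2\<close> by (simp add: ennreal_plus ennreal_mult distrib_right mult.assoc)
    finally show ?thesis .
  qed
  then show ?thesis using \<open>0 \<le> A1\<close> \<open>0 \<le> A2\<close> by (intro exI[of _ "A1 + 2 * A2"]) auto
qed

lemma msd_le_sum_infdist_sq:
  "ennreal (2 * \<kappa>) * msd k
    \<le> ennreal (\<rho> / real m) * (\<Sum>i\<in>{1..m}. \<integral>\<^sup>+\<omega>. ennreal ((infdist (x k \<omega>) (Xs i))^2 / 2) \<partial>M)"
proof -
  have "ennreal (2 * \<kappa>) * msd k = (\<integral>\<^sup>+\<omega>. ennreal (2 * \<kappa>) * ennreal ((infdist (x k \<omega>) X)^2) \<partial>M)"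
    unfolding msd_def by (simp add: nn_integral_cmult)
  also have "\<dots> = (\<integral>\<^sup>+\<omega>. ennreal (\<rho> / real m) * ennreal ((infdist (x k \<omega>) X)^2 / (2 * \<eta>)) \<partial>M)"
  proof (rule nn_integral_cong)
    fix \<omega>
    have "2 * \<kappa> * (infdist (x k \<omega>) X)^2 = \<rho> / real m * ((infdist (x k \<omega>) X)^2 / (2 * \<eta>))"
      unfolding \<kappa>_def using m_pos \<eta>_pos by (simp add: field_simps)
    then show "ennreal (2 * \<kappa>) * ennreal ((infdist (x k \<omega>) X)^2)
        = ennreal (\<rho> / real m) * ennreal ((infdist (x k \<omega>) X)^2 / (2 * \<eta>))"
      using \<kappa>_pos \<eta>_pos \<rho>_pos by (simp add: ennreal_mult[symmetric])
  qed
  also have "\<dots> \<le> (\<integral>\<^sup>+\<omega>. ennreal (\<rho> / real m) * (\<Sum>i\<in>{1..m}. ennreal ((infdist (x k \<omega>) (Xs i))^2 / 2)) \<partial>M)"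
  proof (intro nn_integral_mono mult_left_mono)
    fix \<omega>
    have "(infdist (x k \<omega>) X)^2 / (2 * \<eta>) \<le> (\<Sum>i\<in>{1..m}. (infdist (x k \<omega>) (Xs i))^2 / 2)"
      using error_bound[of "x k \<omega>"] \<eta>_pos by (simp add: field_simps sum_divide_distrib[symmetric])
    then show "ennreal ((infdist (x k \<omega>) X)^2 / (2 * \<eta>)) \<le> (\<Sum>i\<in>{1..m}. ennreal ((infdist (x k \<omega>) (Xs i))^2 / 2))"
      by (simp add: ennreal_leI)
  qed simp
  also have "\<dots> = ennreal (\<rho> / real m) * (\<integral>\<^sup>+\<omega>. (\<Sum>i\<in>{1..m}. ennreal ((infdist (x k \<omega>) (Xs i))^2 / 2)) \<partial>M)"
    by (rule nn_integral_cmult) measurable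
  also have "(\<integral>\<^sup>+\<omega>. (\<Sum>i\<in>{1..m}. ennreal ((infdist (x k \<omega>) (Xs i))^2 / 2)) \<partial>M)
      = (\<Sum>i\<in>{1..m}. \<integral>\<^sup>+\<omega>. ennreal ((infdist (x k \<omega>) (Xs i))^2 / 2) \<partial>M)"
    by (rule nn_integral_sum) measurable
  finally show ?thesis .
qed

lemma nn_integral_sampled_infdist_sq_ge:
  "ennreal (\<rho> / real m) * (\<Sum>i\<in>{1..m}. \<integral>\<^sup>+\<omega>. ennreal ((infdist (x k \<omega>) (Xs i))^2 / 2) \<partial>M)
    \<le> (\<integral>\<^sup>+\<omega>. ennreal ((infdist (x k \<omega>) (Xs (l k \<omega>)))^2 / 2) \<partial>M)"
proof -
  interpret Filt_k: sigma_finite_subalgebra M "Filt k" by (rule sigma_finite_subalgebra_Filt)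
  define d where "d i \<omega> = ennreal ((infdist (x k \<omega>) (Xs i))^2 / 2)" for i \<omega>
  define A where "A i = {\<omega> \<in> space M. l k \<omega> = i}" for i
  have d_Filt: "d i \<in> borel_measurable (Filt k)" for i
    unfolding d_def[abs_def] by (rule measurable_compose[OF x_adapted]) measurable
  have [measurable]: "d i \<in> borel_measurable M" for i
    unfolding d_def[abs_def] by measurable
  have A_sets [measurable]: "A i \<in> sets M" for i
    unfolding A_def by measurable
  have "ennreal (\<rho> / real m) * (\<Sum>i\<in>{1..m}. \<integral>\<^sup>+\<omega>. d i \<omega> \<partial>M)
      = (\<Sum>i\<in>{1..m}. \<integral>\<^sup>+\<omega>. d i \<omega> * ennreal (\<rho> / real m) \<partial>M)"
    by (simp add: sum_distrib_left nn_integral_multc mult.commute)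
  also have "\<dots> \<le> (\<Sum>i\<in>{1..m}. \<integral>\<^sup>+\<omega>. d i \<omega> * ennreal (indicator (A i) \<omega>) \<partial>M)"
  proof (rule sum_mono)
    fix i assume "i \<in> {1..m}"
    then have "AE \<omega> in M. \<rho> / real m \<le> real_cond_exp M (Filt k) (indicator (A i)) \<omega>"
      unfolding A_def by (rule sampling)
    then show "(\<integral>\<^sup>+\<omega>. d i \<omega> * ennreal (\<rho> / real m) \<partial>M) \<le> (\<integral>\<^sup>+\<omega>. d i \<omega> * ennreal (indicator (A i) \<omega>) \<partial>M)"
      by (rule Filt_k.nn_integral_mult_indicator_ge[OF d_Filt A_sets])
  qed
  also have "\<dots> = (\<integral>\<^sup>+\<omega>. (\<Sum>i\<in>{1..m}. d i \<omega> * ennreal (indicator (A i) \<omega>)) \<partial>M)"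
    by (rule nn_integral_sum[symmetric]) measurable
  also have "\<dots> = (\<integral>\<^sup>+\<omega>. d (l k \<omega>) \<omega> \<partial>M)"
  proof (rule nn_integral_cong)
    fix \<omega> assume "\<omega> \<in> space M"
    then have "(\<Sum>i\<in>{1..m}. d i \<omega> * ennreal (indicator (A i) \<omega>)) = (\<Sum>i\<in>{1..m}. if l k \<omega> = i then d i \<omega> else 0)"
      by (intro sum.cong) (auto simp: A_def indicator_def)
    then show "(\<Sum>i\<in>{1..m}. d i \<omega> * ennreal (indicator (A i) \<omega>)) = d (l k \<omega>) \<omega>"
      using l_range[OF \<open>\<omega> \<in> space M\<close>] by simp
  qed
  finally show ?thesis unfolding d_def .
qed

lemma msd_step:
  "msd (Suc k) + ennreal (2 * \<kappa>) * msd k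
    \<le> ennreal (1 + \<kappa>) * msd k + ennreal ((2 + 1 / \<kappa>) * (\<gamma> k)^2) * (\<integral>\<^sup>+\<omega>. ennreal ((norm (G_y k \<omega>))^2) \<partial>M)"
proof -
  have pointwise: "ennreal ((infdist (x (Suc k) \<omega>) X)^2) + ennreal ((infdist (x k \<omega>) (Xs (l k \<omega>)))^2 / 2)
      \<le> ennreal (1 + \<kappa>) * ennreal ((infdist (x k \<omega>) X)^2)
        + ennreal ((2 + 1 / \<kappa>) * (\<gamma> k)^2) * ennreal ((norm (G_y k \<omega>))^2)"
    if "\<omega> \<in> space M" for \<omega>
  proof -
    have "l k \<omega> \<in> {1..m}" using l_range[OF that] .
    then have "(infdist (x (Suc k) \<omega>) X)^2 + (infdist (x k \<omega>) (Xs (l k \<omega>)))^2 / 2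
        \<le> (1 + \<kappa>) * (infdist (x k \<omega>) X)^2 + (2 + 1 / \<kappa>) * (norm (\<gamma> k *\<^sub>R G_y k \<omega>))^2"
      unfolding x_Suc[OF that]
      by (intro infdist_closest_point_step Xs_convex Xs_closed X_subset_Xs X_closed X_nonempty \<kappa>_pos)
    also have "(norm (\<gamma> k *\<^sub>R G_y k \<omega>))^2 = (\<gamma> k)^2 * (norm (G_y k \<omega>))^2"
      by (simp add: power_mult_distrib)
    finally have "ennreal ((infdist (x (Suc k) \<omega>) X)^2 + (infdist (x k \<omega>) (Xs (l k \<omega>)))^2 / 2)
        \<le> ennreal ((1 + \<kappa>) * (infdist (x k \<omega>) X)^2 + ((2 + 1 / \<kappa>) * (\<gamma> k)^2) * (norm (G_y k \<omega>))^2)"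
      by (intro ennreal_leI) (simp add: mult.assoc)
    then show ?thesis using \<kappa>_pos by (simp add: ennreal_plus ennreal_mult)
  qed
  have "msd (Suc k) + ennreal (2 * \<kappa>) * msd k
      \<le> msd (Suc k) + (\<integral>\<^sup>+\<omega>. ennreal ((infdist (x k \<omega>) (Xs (l k \<omega>)))^2 / 2) \<partial>M)"
    using order_trans[OF msd_le_sum_infdist_sq nn_integral_sampled_infdist_sq_ge] by (rule add_left_mono)
  also have "\<dots> = (\<integral>\<^sup>+\<omega>. ennreal ((infdist (x (Suc k) \<omega>) X)^2)
      + ennreal ((infdist (x k \<omega>) (Xs (l k \<omega>)))^2 / 2) \<partial>M)"
    unfolding msd_def by (rule nn_integral_add[symmetric]) measurable
  also have "\<dots> \<le> (\<integral>\<^sup>+\<omega>. ennreal (1 + \<kappa>) * ennreal ((infdist (x k \<omega>) X)^2)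
      + ennreal ((2 + 1 / \<kappa>) * (\<gamma> k)^2) * ennreal ((norm (G_y k \<omega>))^2) \<partial>M)"
    using pointwise by (rule nn_integral_mono)
  also have "\<dots> = ennreal (1 + \<kappa>) * msd k
      + ennreal ((2 + 1 / \<kappa>) * (\<gamma> k)^2) * (\<integral>\<^sup>+\<omega>. ennreal ((norm (G_y k \<omega>))^2) \<partial>M)"
    unfolding msd_def by (simp add: nn_integral_add nn_integral_cmult)
  finally show ?thesis .
qed

lemma msd_step_bound:
  "\<exists>A\<ge>0. \<forall>k. msd (Suc k) + ennreal (2 * \<kappa>) * msd k
      \<le> ennreal (1 + \<kappa>) * msd k + ennreal (A * (\<gamma> k)^2) * (1 + msd k + msd_prev k)"
proof -
  obtain A where "0 \<le> A" and A: "\<And>k. (\<integral>\<^sup>+\<omega>. ennreal ((norm (G_y k \<omega>))^2) \<partial>M) \<le> ennreal A * (1 + msd k + msd_prev k)"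
    using G_y_second_moment_le by blast
  have "msd (Suc k) + ennreal (2 * \<kappa>) * msd k
      \<le> ennreal (1 + \<kappa>) * msd k + ennreal ((2 + 1 / \<kappa>) * A * (\<gamma> k)^2) * (1 + msd k + msd_prev k)" for k
  proof -
    have "msd (Suc k) + ennreal (2 * \<kappa>) * msd k
        \<le> ennreal (1 + \<kappa>) * msd k + ennreal ((2 + 1 / \<kappa>) * (\<gamma> k)^2) * (ennreal A * (1 + msd k + msd_prev k))"
      by (rule order_trans[OF msd_step add_left_mono[OF mult_left_mono[OF A zero_le]]])
    also have "\<dots> = ennreal (1 + \<kappa>) * msd k + ennreal ((2 + 1 / \<kappa>) * A * (\<gamma> k)^2) * (1 + msd k + msd_prev k)"
      using \<kappa>_pos \<open>0 \<le> A\<close> by (simp add: ennreal_mult mult.assoc mult.left_commute)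
    finally show ?thesis .
  qed
  moreover have "0 \<le> (2 + 1 / \<kappa>) * A" using \<kappa>_pos \<open>0 \<le> A\<close> by simp
  ultimately show ?thesis by blast
qed

lemma msd_recursion:
  "\<exists>A\<ge>0. \<forall>k. msd k \<noteq> \<infinity> \<and> enn2real (msd (Suc k))
      \<le> (1 - \<kappa>) * enn2real (msd k) + A * (\<gamma> k)^2 * (1 + enn2real (msd k) + enn2real (msd_prev k))"
proof -
  obtain A where "0 \<le> A" and step: "\<And>k. msd (Suc k) + ennreal (2 * \<kappa>) * msd k
      \<le> ennreal (1 + \<kappa>) * msd k + ennreal (A * (\<gamma> k)^2) * (1 + msd k + msd_prev k)"
    using msd_step_bound by blast
  \<comment> \<open>Once msd k and msd_prev k are finite the step can be read in the reals; this gives finiteness by induction.\<close>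
  have real_step: "msd (Suc k) \<noteq> \<infinity> \<and> enn2real (msd (Suc k)) + 2 * \<kappa> * enn2real (msd k)
      \<le> (1 + \<kappa>) * enn2real (msd k) + A * (\<gamma> k)^2 * (1 + enn2real (msd k) + enn2real (msd_prev k))"
    if "msd k \<noteq> \<infinity>" "msd_prev k \<noteq> \<infinity>" for k
  proof -
    define a where "a = enn2real (msd k)"
    define b where "b = enn2real (msd_prev k)"
    have "0 \<le> a" "0 \<le> b" unfolding a_def b_def by simp_all
    have "msd k = ennreal a" "msd_prev k = ennreal b"
      unfolding a_def b_def using that by (simp_all add: ennreal_enn2real_if)
    then have bound: "msd (Suc k) + ennreal (2 * \<kappa> * a) \<le> ennreal ((1 + \<kappa>) * a + A * (\<gamma> k)^2 * (1 + a + b))"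
      using step[of k] \<kappa>_pos \<open>0 \<le> A\<close> \<open>0 \<le> a\<close> \<open>0 \<le> b\<close> by (simp add: ennreal_plus ennreal_mult)
    have "0 \<le> 2 * \<kappa> * a" "0 \<le> (1 + \<kappa>) * a + A * (\<gamma> k)^2 * (1 + a + b)"
      using \<kappa>_pos \<open>0 \<le> A\<close> \<open>0 \<le> a\<close> \<open>0 \<le> b\<close> by simp_all
    note ennreal_add_le_ennreal_imp[OF bound this]
    then show ?thesis unfolding a_def b_def by blast
  qed
  have finite: "msd k \<noteq> \<infinity> \<and> msd_prev k \<noteq> \<infinity>" for k
  proof (induction k)
    case 0
    then show ?case by (simp add: msd_0 msd_prev_0)
  next
    case (Suc k)
    then show ?case using real_step[of k] by (simp add: msd_prev_Suc)
  qed
  have "enn2real (msd (Suc k))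
      \<le> (1 - \<kappa>) * enn2real (msd k) + A * (\<gamma> k)^2 * (1 + enn2real (msd k) + enn2real (msd_prev k))" for k
    using real_step[of k] finite[of k] by (simp add: algebra_simps)
  then show ?thesis using finite \<open>0 \<le> A\<close> by blast
qed

lemma infdist_AE_tendsto_0:
  assumes "summable (\<lambda>k. (\<gamma> k)^2)"
  shows "AE \<omega> in M. (\<lambda>k. infdist (x k \<omega>) X) \<longlonglongrightarrow> 0"
proof -
  obtain A where "0 \<le> A" and finite: "\<And>k. msd k \<noteq> \<infinity>" and rec: "\<And>k. enn2real (msd (Suc k))
      \<le> (1 - \<kappa>) * enn2real (msd k) + A * (\<gamma> k)^2 * (1 + enn2real (msd k) + enn2real (msd_prev k))"
    using msd_recursion by blast
  define u where "u k = enn2real (msd_prev k)" for k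
  have "summable u"
  proof (rule two_step_recursion_summable[OF _ \<kappa>_pos \<kappa>_le_1])
    show "summable (\<lambda>k. A * (\<gamma> k)^2)" using assms by (rule summable_mult)
    show "0 \<le> u k" "0 \<le> A * (\<gamma> k)^2" for k unfolding u_def using \<open>0 \<le> A\<close> by simp_all
    show "u (Suc (Suc k)) \<le> (1 - \<kappa>) * u (Suc k) + A * (\<gamma> k)^2 * (1 + u (Suc k) + u k)" for k
      unfolding u_def msd_prev_Suc using rec[of k] .
  qed
  then have "summable (\<lambda>k. enn2real (msd k))"
    using summable_Suc_iff[of u] by (simp add: u_def msd_prev_Suc)
  then have "(\<Sum>k. ennreal (enn2real (msd k))) \<noteq> top"
    by (rule ennreal_suminf_neq_top) simp
  moreover have "(\<integral>\<^sup>+\<omega>. (\<Sum>k. ennreal ((infdist (x k \<omega>) X)^2)) \<partial>M) = (\<Sum>k. msd k)"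
    unfolding msd_def by (rule nn_integral_suminf) measurable
  ultimately have "AE \<omega> in M. (\<Sum>k. ennreal ((infdist (x k \<omega>) X)^2)) \<noteq> \<infinity>"
    using finite by (intro nn_integral_PInf_AE) (simp_all add: ennreal_enn2real_if)
  then show ?thesis
  proof eventually_elim
    case (elim \<omega>)
    then have "summable (\<lambda>k. (infdist (x k \<omega>) X)^2)" by (intro summable_suminf_not_top) auto
    then have "(\<lambda>k. sqrt ((infdist (x k \<omega>) X)^2)) \<longlonglongrightarrow> sqrt 0"
      by (intro tendsto_real_sqrt summable_LIMSEQ_zero)
    then show ?case by (simp add: infdist_nonneg)
  qed
qed

lemma msd_le_step_sq:
  assumes "\<gamma> \<longlonglongrightarrow> 0" and slow: "\<forall>\<^sub>F k in sequentially. (1 - \<kappa> / 2) * (\<gamma> k)^2 \<le> (\<gamma> (Suc k))^2"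
  shows "\<exists>B>0. \<forall>k. msd k \<le> ennreal (B * (\<gamma> k)^2)"
proof -
  obtain A where "0 \<le> A" and finite: "\<And>k. msd k \<noteq> \<infinity>" and rec: "\<And>k. enn2real (msd (Suc k))
      \<le> (1 - \<kappa>) * enn2real (msd k) + A * (\<gamma> k)^2 * (1 + enn2real (msd k) + enn2real (msd_prev k))"
    using msd_recursion by blast
  have "(\<lambda>k. A * (\<gamma> k)^2) \<longlonglongrightarrow> A * 0^2" by (intro tendsto_intros assms(1))
  then obtain A' where "0 \<le> A'"
    and lin: "\<And>k. enn2real (msd_prev (Suc (Suc k))) \<le> (1 - \<kappa>) * enn2real (msd_prev (Suc k)) + A' * (A * (\<gamma> k)^2)"
    using two_step_recursion_linear[OF _ \<kappa>_pos \<kappa>_le_1, of "\<lambda>k. enn2real (msd_prev k)" "\<lambda>k. A * (\<gamma> k)^2"]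
      rec \<open>0 \<le> A\<close> by (auto simp: msd_prev_Suc)
  have lin': "enn2real (msd (Suc k)) \<le> (1 - \<kappa>) * enn2real (msd k) + (A' * A) * (\<gamma> k)^2" for k
    using lin[of k] by (simp add: msd_prev_Suc mult.assoc)
  have \<gamma>_sq_pos: "0 < (\<gamma> k)^2" for k using step_pos[of k] by simp
  have "\<exists>B>0. \<forall>k. enn2real (msd k) \<le> B * (\<gamma> k)^2"
    by (rule one_step_recursion_rate[where E = "\<lambda>k. enn2real (msd k)" and g = "\<lambda>k. (\<gamma> k)^2",
          OF _ \<kappa>_pos \<kappa>_le_1 _ _ lin' slow])
       (use \<open>0 \<le> A\<close> \<open>0 \<le> A'\<close> \<gamma>_sq_pos in auto)
  then obtain B where "0 < B" and msd_le: "\<And>k. enn2real (msd k) \<le> B * (\<gamma> k)^2" by blast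
  have "msd k \<le> ennreal (B * (\<gamma> k)^2)" for k
  proof -
    have "msd k = ennreal (enn2real (msd k))" using finite[of k] by (simp add: ennreal_enn2real_if)
    also have "\<dots> \<le> ennreal (B * (\<gamma> k)^2)" using msd_le[of k] by (rule ennreal_leI)
    finally show ?thesis .
  qed
  then show ?thesis using \<open>0 < B\<close> by blast
qed

lemma nn_integral_infdist_rate:
  assumes "0 < t" and \<gamma>_eq: "\<And>k. 1 \<le> k \<Longrightarrow> \<gamma> k = 1 / real k powr (t / 2)"
  shows "\<exists>B>0. \<forall>k\<ge>1. (\<integral>\<^sup>+\<omega>. ennreal (infdist (x k \<omega>) X) \<partial>M) \<le> ennreal (B / real k powr (t / 2))"
proof -
  have \<gamma>_sq: "(\<gamma> k)^2 = 1 / real k powr t" if "1 \<le> k" for k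
  proof -
    have "(real k powr (t / 2))^2 = real k powr t" by (simp add: power2_eq_square flip: powr_add)
    then show ?thesis using \<gamma>_eq[OF that] by (simp add: power_divide)
  qed
  have "(\<lambda>k. real k powr - (t / 2)) \<longlonglongrightarrow> 0"
    using \<open>0 < t\<close> by (intro tendsto_neg_powr filterlim_real_sequentially) auto
  moreover have "\<forall>\<^sub>F k in sequentially. real k powr - (t / 2) = \<gamma> k"
    using eventually_ge_at_top[of 1] by eventually_elim (simp add: \<gamma>_eq powr_minus_divide)
  ultimately have "\<gamma> \<longlonglongrightarrow> 0" by (rule Lim_transform_eventually)
  moreover have "\<forall>\<^sub>F k in sequentially. (1 - \<kappa> / 2) * (\<gamma> k)^2 \<le> (\<gamma> (Suc k))^2"
    using eventually_inverse_powr_Suc_ge[OF \<kappa>_pos \<kappa>_le_1, of t] eventually_ge_at_top[of 1]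
    by eventually_elim (simp add: \<gamma>_sq)
  ultimately obtain B where "0 < B" and msd_le: "\<And>k. msd k \<le> ennreal (B * (\<gamma> k)^2)"
    using msd_le_step_sq by blast
  have "(\<integral>\<^sup>+\<omega>. ennreal (infdist (x k \<omega>) X) \<partial>M) \<le> ennreal (sqrt B / real k powr (t / 2))"
    if "1 \<le> k" for k
  proof -
    have "(\<integral>\<^sup>+\<omega>. ennreal (infdist (x k \<omega>) X) \<partial>M) \<le> ennreal (sqrt (B * (\<gamma> k)^2))"
      using \<open>0 < B\<close> step_pos[of k] msd_le[of k] unfolding msd_def by (intro nn_integral_le_sqrt) auto
    also have "sqrt (B * (\<gamma> k)^2) = sqrt B / real k powr (t / 2)"
      using step_pos[of k] \<gamma>_eq[OF that] by (simp add: real_sqrt_mult)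
    finally show ?thesis .
  qed
  then show ?thesis using \<open>0 < B\<close> by (intro exI[of _ "sqrt B"]) auto
qed

lemma nn_integral_infdist_wavg_rate:
  assumes \<gamma>_eq: "\<And>k. 1 \<le> k \<Longrightarrow> \<gamma> k = 1 / sqrt (real k)"
  shows "\<exists>B. \<forall>K\<ge>1. (\<integral>\<^sup>+\<omega>. ennreal (infdist (wavg \<gamma> x kb K \<omega>) X) \<partial>M) \<le> ennreal (B / sqrt (real K))"
proof -
  obtain B where "0 < B" and rate: "\<And>k. 1 \<le> k \<Longrightarrow>
      (\<integral>\<^sup>+\<omega>. ennreal (infdist (x k \<omega>) X) \<partial>M) \<le> ennreal (B / sqrt (real k))"
    using nn_integral_infdist_rate[of 1] \<gamma>_eq by (auto simp: powr_half_sqrt)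
  define B' where "B' = max (infdist x0 X) (sqrt 2 * B)"
  have "0 \<le> B'" unfolding B'_def by (simp add: le_max_iff_disj infdist_nonneg)
  \<comment> \<open>Shift to a bound valid also at k = 0, where B / sqrt 0 = 0 would be useless.\<close>
  have "(\<integral>\<^sup>+\<omega>. ennreal (infdist (x k \<omega>) X) \<partial>M) \<le> ennreal (B' / sqrt (real k + 1))" for k
  proof (cases "k = 0")
    case True
    have "(\<integral>\<^sup>+\<omega>. ennreal (infdist (x k \<omega>) X) \<partial>M) = ennreal (infdist x0 X)"
      unfolding True by (simp add: nn_integral_cong[of M _ "\<lambda>_. ennreal (infdist x0 X)"] x_0 emeasure_space_1)
    then show ?thesis unfolding True B'_def by (simp add: ennreal_leI)
  next
    case False
    then have "1 \<le> k" by simp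
    have "sqrt (real k + 1) \<le> sqrt 2 * sqrt (real k)"
      using \<open>1 \<le> k\<close> by (simp flip: real_sqrt_mult)
    then have "B / sqrt (real k) \<le> sqrt 2 * B / sqrt (real k + 1)"
      using \<open>0 < B\<close> \<open>1 \<le> k\<close> by (simp add: field_simps mult_left_mono)
    also have "\<dots> \<le> B' / sqrt (real k + 1)"
      unfolding B'_def by (intro divide_right_mono) auto
    finally show ?thesis using rate[OF \<open>1 \<le> k\<close>] ennreal_leI order_trans by blast
  qed
  then show ?thesis
    using nn_integral_infdist_wavg_le[where x = x and \<gamma> = \<gamma> and kb = kb,
        OF X_convex X_closed X_nonempty x_measurable step_pos \<open>0 \<le> B'\<close>]
    by blast
qed

end

theorem theorem4:
  fixes M :: "'a measure"
    and Filt :: "nat \<Rightarrow> 'a measure"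
    and m :: nat
    and Xs :: "nat \<Rightarrow> (real^'n) set"
    and DX L C \<nu>1 \<nu>2 \<eta> :: real
    and \<rho>i :: "nat \<Rightarrow> real"
    and F :: "real^'n \<Rightarrow> real^'n"
    and G :: "real^'n \<Rightarrow> 'w \<Rightarrow> real^'n"
    and om :: "nat \<Rightarrow> 'a \<Rightarrow> 'w"
    and l :: "nat \<Rightarrow> 'a \<Rightarrow> nat"
    and \<gamma> :: "nat \<Rightarrow> real"
    and x :: "nat \<Rightarrow> 'a \<Rightarrow> real^'n"
    and xm1 x0 :: "real^'n"
  defines "X \<equiv> (\<Inter>i\<in>{1..m}. Xs i)"
    and "\<rho> \<equiv> Min (\<rho>i ` {1..m})"
  defines "\<beta> \<equiv> 1 - \<rho> / (32 * real m * \<eta>)"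
  assumes M: "prob_space M"
    and filt_sub: "\<forall>k. subalgebra M (Filt k)"
    and filt_mono: "\<forall>k. sets (Filt k) \<subseteq> sets (Filt (Suc k))"
    and m_pos: "m \<ge> 1"
    and Xs_cc: "\<forall>i\<in>{1..m}. closed (Xs i) \<and> convex (Xs i)"
    and X_ne: "X \<noteq> {}"
    and DX: "DX > 0" "\<forall>u\<in>X. \<forall>v\<in>X. norm (u - v)^2 \<le> DX^2"
    and G_mean: "\<forall>k z. integrable M (\<lambda>\<omega>. G z (om k \<omega>)) \<and>
                        (\<integral>\<omega>. G z (om k \<omega>) \<partial>M) = F z"
    and A1: "L > 0" "\<forall>u v. norm (F u - F v) \<le> L * norm (u - v)"
            "\<forall>u v. (F u - F v) \<bullet> (u - v) \<ge> 0"
    and A2: "VI_sol X F \<noteq> {}" "compact (VI_sol X F)"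
            "\<forall>xs\<in>VI_sol X F. norm (F xs) \<le> C"
    and A4: "\<nu>1 \<ge> 0" "\<nu>2 \<ge> 0"
            "\<forall>k. integrable M (\<lambda>\<omega>. G (extrap x xm1 k \<omega>) (om k \<omega>) - F (extrap x xm1 k \<omega>))"
            "\<forall>k j. AE \<omega> in M. real_cond_exp M (Filt k)
                    (\<lambda>\<omega>. (G (extrap x xm1 k \<omega>) (om k \<omega>) - F (extrap x xm1 k \<omega>)) $ j) \<omega> = 0"
            "\<forall>k. AE \<omega> in M. nn_cond_exp M (Filt k)
                    (\<lambda>\<omega>. ennreal ((norm (G (extrap x xm1 k \<omega>) (om k \<omega>) - F (extrap x xm1 k \<omega>)))^2)) \<omega>
                  \<le> ennreal (\<nu>1^2 * (norm (extrap x xm1 k \<omega>))^2 + \<nu>2^2)"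
    and A5: "\<eta> > 0"
            "\<forall>z. (norm (z - closest_point X z))^2
                   \<le> \<eta> * (MAX i\<in>{1..m}. (norm (z - closest_point (Xs i) z))^2)"
    and A6: "\<forall>i\<in>{1..m}. 0 < \<rho>i i \<and> \<rho>i i \<le> 1"
            "\<forall>i\<in>{1..m}. AE \<omega> in M. \<forall>k.
                real_cond_exp M (Filt k) (indicator {\<omega>\<in>space M. l k \<omega> = i}) \<omega> \<ge> \<rho>i i / real m"
    and l_range: "\<forall>k. \<forall>\<omega>\<in>space M. l k \<omega> \<in> {1..m}"
    and adapted: "\<forall>k. x k \<in> borel_measurable (Filt k)"
            "\<forall>k. l k \<in> measurable (Filt (Suc k)) (count_space UNIV)"
            "\<forall>k. (\<lambda>\<omega>. G (extrap x xm1 k \<omega>) (om k \<omega>)) \<in> borel_measurable (Filt (Suc k))"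
    and step_pos: "\<forall>k. \<gamma> k > 0"
    and init: "\<forall>\<omega>\<in>space M. x 0 \<omega> = x0"
    and rSPRG: "\<forall>k. \<forall>\<omega>\<in>space M. x (Suc k) \<omega> =
                 closest_point (Xs (l k \<omega>)) (x k \<omega> - \<gamma> k *\<^sub>R G (extrap x xm1 k \<omega>) (om k \<omega>))"
  shows
    "((\<not> summable \<gamma>) \<and> summable (\<lambda>k. (\<gamma> k)^2) \<longrightarrow>
        (AE \<omega> in M. (\<lambda>k. infdist (x k \<omega>) X) \<longlonglongrightarrow> 0))
   \<and> (\<forall>t::real. t \<ge> 1 \<and> (\<forall>k\<ge>1. \<gamma> k = 1 / (real k) powr (t / 2)) \<longrightarrow>
        (\<exists>B. \<forall>k\<ge>kbar \<beta> t.
            (\<integral>\<^sup>+ \<omega>. ennreal (infdist (x k \<omega>) X) \<partial>M) \<le> ennreal (B / (real k) powr (t / 2))))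
   \<and> ((\<forall>k\<ge>1. \<gamma> k = 1 / sqrt (real k)) \<longrightarrow>
        (\<exists>B. \<forall>K\<ge>1.
            (\<integral>\<^sup>+ \<omega>. ennreal (infdist (wavg \<gamma> x (kbar \<beta> 1) K \<omega>) X) \<partial>M)
              \<le> ennreal (B / sqrt (real K))))"
proof -
  interpret prob_space M by (rule M)
  have X_sub: "X \<subseteq> Xs i" if "i \<in> {1..m}" for i unfolding X_def using that by auto
  have "closed X" "convex X" unfolding X_def using Xs_cc by (auto intro!: closed_INT convex_INT)
  have "\<rho> \<in> \<rho>i ` {1..m}" unfolding \<rho>_def using m_pos by (intro Min_in) auto
  then have "0 < \<rho>" "\<rho> \<le> 1" using A6(1) by auto
  interpret S: random_projection_scheme M Filt m Xs X F L G om \<nu>1 \<nu>2 \<eta> \<rho> l \<gamma> x xm1 x0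
  proof unfold_locales
    show "bounded X" using DX(2) by (rule norm_diff_sq_le_imp_bounded)
    show "lipschitz_on L UNIV F" using A1 by (intro lipschitz_onI) (auto simp: dist_norm)
    show "(infdist z X)^2 \<le> \<eta> * (\<Sum>i\<in>{1..m}. (infdist z (Xs i))^2)" for z
      using A5 \<open>closed X\<close> X_ne Xs_cc X_sub m_pos by (intro infdist_sq_le_sum_if_le_Max) auto
    show "AE \<omega> in M. \<rho> / real m \<le> real_cond_exp M (Filt k) (indicator {\<omega> \<in> space M. l k \<omega> = i}) \<omega>"
      if "i \<in> {1..m}" for i k
    proof -
      have "\<rho> / real m \<le> \<rho>i i / real m" unfolding \<rho>_def using that by (intro divide_right_mono Min_le) auto
      with A6(2)[rule_format, OF that] show ?thesis by (auto elim!: eventually_mono intro: order_trans)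
    qed
    show "l k \<in> measurable M (count_space UNIV)" "(\<lambda>\<omega>. G (extrap x xm1 k \<omega>) (om k \<omega>)) \<in> borel_measurable M" for k
      using adapted(2,3) filt_sub by (blast intro: measurable_from_subalg)+
  qed (use filt_sub m_pos Xs_cc X_sub \<open>closed X\<close> \<open>convex X\<close> X_ne A4(5) A5(1) \<open>0 < \<rho>\<close> \<open>\<rho> \<le> 1\<close>
         l_range adapted(1) step_pos init rSPRG in blast)+
  have kbar_ge: "1 \<le> kbar \<beta> t" if "0 < t" for t
    unfolding \<beta>_def using that by (rule S.kbar_rate_ge_1)
  show ?thesis
  proof (intro conjI allI impI)
    show "AE \<omega> in M. (\<lambda>k. infdist (x k \<omega>) X) \<longlonglongrightarrow> 0"
      if "\<not> summable \<gamma> \<and> summable (\<lambda>k. (\<gamma> k)^2)"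
      using that S.infdist_AE_tendsto_0 by blast
    show "\<exists>B. \<forall>k\<ge>kbar \<beta> t. (\<integral>\<^sup>+\<omega>. ennreal (infdist (x k \<omega>) X) \<partial>M) \<le> ennreal (B / real k powr (t / 2))"
      if "t \<ge> 1 \<and> (\<forall>k\<ge>1. \<gamma> k = 1 / real k powr (t / 2))" for t
    proof -
      \<comment> \<open>At k = 0 the claimed bound is B / 0 = 0, so the restriction to k \<ge> kbar \<ge> 1 matters.\<close>
      have "\<exists>B>0. \<forall>k\<ge>1. (\<integral>\<^sup>+\<omega>. ennreal (infdist (x k \<omega>) X) \<partial>M) \<le> ennreal (B / real k powr (t / 2))"
        using that by (intro S.nn_integral_infdist_rate) auto
      then show ?thesis using kbar_ge[of t] that by (auto intro: le_trans)
    qed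
    show "\<exists>B. \<forall>K\<ge>1. (\<integral>\<^sup>+\<omega>. ennreal (infdist (wavg \<gamma> x (kbar \<beta> 1) K \<omega>) X) \<partial>M) \<le> ennreal (B / sqrt (real K))"
      if "\<forall>k\<ge>1. \<gamma> k = 1 / sqrt (real k)"
      using that S.nn_integral_infdist_wavg_rate by blast
  qed
qed

end
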